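(* Let $\Lambda$ be a recursive $\varepsilon$-number and $\mathcal{H}$ as in the context. For every $x\in H$ there is a formula $\varphi\in\mathbb{F}$ such that $\mathcal{H},x\Vdash\varphi$ and $\mathcal{H},y\not\Vdash\varphi$ for every $y\in x^\downarrow$.
   Context: Fix a recursive ordinal $\Lambda$ that is an $\varepsilon$-number ($\omega^\Lambda=\Lambda$). Formulas: $\mathbb{F}$ is the smallest set containing $\top$, closed under $\wedge$, and such that if $\varphi\in\mathbb{F}$, $n<\omega$, $\alpha<\Lambda$ then $\langle n^\alpha\rangle\varphi\in\mathbb{F}$. Ordinal logarithm: $\ell(0)=0$, $\ell(\alpha+\omega^\beta)=\beta$; an $\ell$-sequence is an $\omega$-sequence of ordinals $x=\langle x_0,x_1,\dots\rangle$ with $x_{i+1}\le\ell(x_i)$ for all $i$; $H$ is the set of $\ell$-sequences all of whose entries are $<\Lambda$ and some entry of which is $0$. For $n<\omega$, $xS_ny$ iff $x_m>y_m$ for all $m\le n$ and $x_i\ge y_i$ for all $i>n$. $xS_n^0y$ iff $x=y$; $xS_n^{1+\alpha}y$ iff for every $\beta<1+\alpha$ there is $z\in H$ with $xS_nz$ and $zS_n^\beta y$. The model $\mathcal{H}=\langle H,\{S_n\}_{n<\omega}\rangle$ has forcing: $x\Vdash\top$ always; $x\Vdash\varphi\wedge\psi$ iff $x\Vdash\varphi$ and $x\Vdash\psi$; $x\Vdash\langle n^\alpha\rangle\varphi$ iff there is $y\in H$ with $xS_n^\alpha y$ and $y\Vdash\varphi$. For $x\in H$, $x^\downarrow$ is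 the set of $y\in H$ such that $y_j<x_j$ for some $j<\omega$. *)

theory Defs
  imports Main "HOL-Library.Countable_Set"
begin

text \<open>The ordinals below \<Lambda> are represented by the elements of a well-ordered
type 'a whose order type is \<Lambda>. Ordinal notions are defined order-theoretically.\<close>

definition ozero :: "'a::wellorder" where
  "ozero = (LEAST z. True)"

definition oiso :: "'a::wellorder set \<Rightarrow> 'b::wellorder set \<Rightarrow> bool" where
  "oiso A B \<longleftrightarrow> (\<exists>f. bij_betw f A B \<and> (\<forall>u\<in>A. \<forall>v\<in>A. u < v \<longrightarrow> f u < f v))"

text \<open>additively principal ordinals (the ordinals of the form \<omega>^\<beta>):
  p > 0 and \<xi> + p = p for all \<xi> < p, i.e. the interval [\<xi>,p) has order type p\<close>
definition addprin :: "'a::wellorder \<Rightarrow> bool" where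
  "addprin p \<longleftrightarrow> ozero < p \<and> (\<forall>a. a < p \<longrightarrow> oiso {z. a \<le> z \<and> z < p} {z. z < p})"

text \<open>ordinal logarithm: ell 0 = 0, ell (\<gamma> + \<omega>^\<beta>) = \<beta>.  Here \<gamma> + \<pi> = a means that
  [\<gamma>,a) has order type \<pi>, and \<pi> = \<omega>^\<beta> means that \<pi> is additively principal and
  \<beta> is the order type of the set of additively principal ordinals below \<pi>.\<close>
definition ell :: "'a::wellorder \<Rightarrow> 'a" where
  "ell a = (if a = ozero then ozero else
     (THE b. \<exists>g (p::'a). g \<le> a \<and> addprin p \<and> oiso {z. g \<le> z \<and> z < a} {z. z < p}
                 \<and> oiso {z. z < b} {q. addprin q \<and> q < p}))"

text \<open>\<Lambda> (the order type of 'a) is an epsilon number: the additively principal ordinals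
  below \<Lambda> are cofinal in \<Lambda> and have order type \<Lambda> (equivalently \<omega>^\<Lambda> = \<Lambda>).\<close>
definition eps_number_type :: "'a::wellorder itself \<Rightarrow> bool" where
  "eps_number_type T \<longleftrightarrow>
     oiso {p::'a. addprin p} (UNIV :: 'a set) \<and> (\<forall>a::'a. \<exists>p. addprin p \<and> a < p)"

definition lseq :: "(nat \<Rightarrow> 'a::wellorder) \<Rightarrow> bool" where
  "lseq x \<longleftrightarrow> (\<forall>i. x (Suc i) \<le> ell (x i))"

definition Hset :: "(nat \<Rightarrow> 'a::wellorder) set" where
  "Hset = {x. lseq x \<and> (\<exists>i. x i = ozero)}"

definition Srel :: "nat \<Rightarrow> (nat \<Rightarrow> 'a::wellorder) \<Rightarrow> (nat \<Rightarrow> 'a) \<Rightarrow> bool" where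
  "Srel n x y \<longleftrightarrow> (\<forall>m\<le>n. x m > y m) \<and> (\<forall>i>n. x i \<ge> y i)"

definition SrelPow :: "nat \<Rightarrow> 'a::wellorder \<Rightarrow> (nat \<Rightarrow> 'a) \<Rightarrow> (nat \<Rightarrow> 'a) \<Rightarrow> bool" where
  "SrelPow n = wfrec {(b, a). b < a}
     (\<lambda>R \<alpha> x y. if \<alpha> = ozero then x = y
                else (\<forall>\<beta>. \<beta> < \<alpha> \<longrightarrow> (\<exists>z\<in>Hset. Srel n x z \<and> R \<beta> z y)))"

datatype 'a fm = Top | Conj "'a fm" "'a fm" | Dia nat 'a "'a fm"

fun forces :: "(nat \<Rightarrow> 'a::wellorder) \<Rightarrow> 'a fm \<Rightarrow> bool" where
  "forces x Top = True"
| "forces x (Conj \<phi> \<psi>) = (forces x \<phi> \<and> forces x \<psi>)"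
| "forces x (Dia n \<alpha> \<phi>) = (\<exists>y\<in>Hset. SrelPow n \<alpha> x y \<and> forces y \<phi>)"

definition down :: "(nat \<Rightarrow> 'a::wellorder) \<Rightarrow> (nat \<Rightarrow> 'a) set" where
  "down x = {y\<in>Hset. \<exists>j. y j < x j}"

end

theory Submission
  imports Defs
begin

text \<open>Pick N with x N = 0 and let \<phi> be the conjunction of the formulas
  \<langle>n^(x n)\<rangle>\<top> for n < N. Every S_n-step strictly lowers the n-th entry, so
  y S_n^\<alpha> z implies \<alpha> \<le> y n; hence a y with y j < x j (necessarily j < N) refutes
  \<langle>j^(x j)\<rangle>\<top>. Conversely x reaches the constant-0 sequence by an S_n^(x n)-path, because
  for every \<beta> < x n some z \<in> H has x S_n z and z n = \<beta>. Such a z is built entry by entry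
  from the fact that every \<beta> < ell a equals ell c for some c < a, which is the only piece of
  ordinal arithmetic needed; as ordinals are elements of a well-ordered type, it is proved
  from order types of initial and final segments.\<close>

lemma ozero_le [simp]: "ozero \<le> (z::'a::wellorder)"
  by (simp add: ozero_def Least_le)

lemma not_less_ozero [simp]: "\<not> (z::'a::wellorder) < ozero"
  by (simp add: not_less)

lemma ozero_less_iff: "ozero < (z::'a::wellorder) \<longleftrightarrow> z \<noteq> ozero"
  using ozero_le[of z] by (auto simp: le_less)

lemma ell_ozero [simp]: "ell ozero = ozero"
  by (simp add: ell_def)

definition order_iso_on :: "('a::linorder \<Rightarrow> 'b::linorder) \<Rightarrow> 'a set \<Rightarrow> 'b set \<Rightarrow> bool" where
  "order_iso_on f A B \<longleftrightarrow> bij_betw f A B \<and> strict_mono_on A f"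

lemma oiso_iff_order_iso_on: "oiso A B \<longleftrightarrow> (\<exists>f. order_iso_on f A B)"
  by (simp add: oiso_def order_iso_on_def monotone_on_def)

lemma order_iso_on_imageD: "order_iso_on f A B \<Longrightarrow> f ` A = B"
  by (simp add: order_iso_on_def bij_betw_def)

lemma order_iso_on_less_iff:
  "order_iso_on f A B \<Longrightarrow> u \<in> A \<Longrightarrow> v \<in> A \<Longrightarrow> f u < f v \<longleftrightarrow> u < v"
  unfolding order_iso_on_def by (meson strict_mono_on_less)

lemma order_iso_on_le_iff:
  "order_iso_on f A B \<Longrightarrow> u \<in> A \<Longrightarrow> v \<in> A \<Longrightarrow> f u \<le> f v \<longleftrightarrow> u \<le> v"
  unfolding order_iso_on_def by (meson strict_mono_on_less_eq)

lemma order_iso_on_inverse: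
  assumes f: "order_iso_on f A B"
  shows "order_iso_on (the_inv_into A f) B A"
proof -
  have bij: "bij_betw f A B" using f by (simp add: order_iso_on_def)
  have "strict_mono_on B (the_inv_into A f)"
  proof (rule strict_mono_onI)
    fix u v assume uv: "u \<in> B" "v \<in> B" "u < v"
    have "the_inv_into A f u \<in> A" "the_inv_into A f v \<in> A"
      using uv bij_betw_apply[OF bij_betw_the_inv_into[OF bij]] by auto
    moreover have "f (the_inv_into A f u) = u" "f (the_inv_into A f v) = v"
      using uv f_the_inv_into_f_bij_betw[OF bij] by auto
    ultimately show "the_inv_into A f u < the_inv_into A f v"
      using order_iso_on_less_iff[OF f] \<open>u < v\<close> by metis
  qed
  then show ?thesis
    by (simp add: order_iso_on_def bij_betw_the_inv_into[OF bij])
qed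

lemma order_iso_on_comp:
  "order_iso_on f A B \<Longrightarrow> order_iso_on g B C \<Longrightarrow> order_iso_on (g \<circ> f) A C"
  unfolding order_iso_on_def
  by (auto intro: bij_betw_trans monotone_on_o comp_inj_on simp: bij_betw_def)

lemma oiso_sym: "oiso A B \<Longrightarrow> oiso B A"
  by (meson oiso_iff_order_iso_on order_iso_on_inverse)

lemma oiso_trans: "oiso A B \<Longrightarrow> oiso B C \<Longrightarrow> oiso A C"
  by (meson oiso_iff_order_iso_on order_iso_on_comp)

lemma oiso_refl: "oiso A A"
  unfolding oiso_def by (rule exI[of _ id]) simp

lemma oiso_empty_iff: "oiso A B \<Longrightarrow> A = {} \<longleftrightarrow> B = {}"
  unfolding oiso_def bij_betw_def by blast

lemma order_iso_on_restrict: "order_iso_on f A B \<Longrightarrow> A' \<subseteq> A \<Longrightarrow> order_iso_on f A' (f ` A')"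
  unfolding order_iso_on_def by (meson bij_betw_subset monotone_on_subset)

lemma order_iso_on_below:
  assumes f: "order_iso_on f A B" and c: "c \<in> A"
  shows "order_iso_on f {z\<in>A. z < c} {w\<in>B. w < f c}"
proof -
  have "f ` {z\<in>A. z < c} = {w\<in>B. w < f c}"
  proof (intro equalityI subsetI)
    fix w assume "w \<in> f ` {z\<in>A. z < c}"
    then show "w \<in> {w\<in>B. w < f c}"
      using order_iso_on_imageD[OF f] order_iso_on_less_iff[OF f _ c] by blast
  next
    fix w assume "w \<in> {w\<in>B. w < f c}"
    then obtain z where "z \<in> A" "w = f z" "f z < f c"
      using order_iso_on_imageD[OF f] by blast
    then show "w \<in> f ` {z\<in>A. z < c}"
      using order_iso_on_less_iff[OF f _ c] by blast
  qed
  moreover have "order_iso_on f {z\<in>A. z < c} (f ` {z\<in>A. z < c})"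
    by (rule order_iso_on_restrict[OF f]) blast
  ultimately show ?thesis by simp
qed

lemma order_iso_on_above:
  assumes f: "order_iso_on f A B" and c: "c \<in> A"
  shows "order_iso_on f {z\<in>A. c \<le> z} {w\<in>B. f c \<le> w}"
proof -
  have "f ` {z\<in>A. c \<le> z} = {w\<in>B. f c \<le> w}"
  proof (intro equalityI subsetI)
    fix w assume "w \<in> f ` {z\<in>A. c \<le> z}"
    then show "w \<in> {w\<in>B. f c \<le> w}"
      using order_iso_on_imageD[OF f] order_iso_on_le_iff[OF f c] by blast
  next
    fix w assume "w \<in> {w\<in>B. f c \<le> w}"
    then obtain z where "z \<in> A" "w = f z" "f c \<le> f z"
      using order_iso_on_imageD[OF f] by blast
    then show "w \<in> f ` {z\<in>A. c \<le> z}"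
      using order_iso_on_le_iff[OF f c] by blast
  qed
  moreover have "order_iso_on f {z\<in>A. c \<le> z} (f ` {z\<in>A. c \<le> z})"
    by (rule order_iso_on_restrict[OF f]) blast
  ultimately show ?thesis by simp
qed

lemma strict_mono_on_down_closed_le:
  fixes f :: "'a::wellorder \<Rightarrow> 'a"
  assumes mono: "strict_mono_on D f"
    and down: "\<And>u v. u \<in> D \<Longrightarrow> v < u \<Longrightarrow> v \<in> D"
  shows "u \<in> D \<Longrightarrow> u \<le> f u"
proof (induction u rule: less_induct)
  case (less u)
  show ?case
  proof (rule ccontr)
    assume "\<not> u \<le> f u"
    then have fu: "f u < u" by simp
    then have "f u \<in> D" using down less.prems by blast
    then have "f u \<le> f (f u)" "f (f u) < f u"
      using less.IH fu strict_mono_onD[OF mono _ less.prems fu] by auto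
    then show False by simp
  qed
qed

lemma strict_mono_on_lessThan_le:
  fixes f :: "'a::wellorder \<Rightarrow> 'a"
  assumes "strict_mono_on {z. z < p} f" and "\<And>u. u < p \<Longrightarrow> f u < q"
  shows "p \<le> q"
proof (rule ccontr)
  assume "\<not> p \<le> q"
  then have "q < p" by simp
  then have "q \<le> f q"
    by (intro strict_mono_on_down_closed_le[OF assms(1)]) auto
  with assms(2)[OF \<open>q < p\<close>] show False by (simp add: leD)
qed

lemma oiso_lessThan_eq:
  fixes p q :: "'a::wellorder"
  assumes "oiso {z. z < p} {z. z < q}"
  shows "p = q"
proof -
  have le: "p \<le> q" if iso: "oiso {z. z < p} {z. z < q}" for p q :: 'a
  proof -
    obtain f where f: "order_iso_on f {z. z < p} {z. z < q}"
      using iso oiso_iff_order_iso_on by blast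
    show "p \<le> q"
    proof (rule strict_mono_on_lessThan_le)
      show "strict_mono_on {z. z < p} f" using f by (simp add: order_iso_on_def)
      show "f u < q" if "u < p" for u using that order_iso_on_imageD[OF f] by blast
    qed
  qed
  show ?thesis using le[OF assms] le[OF oiso_sym[OF assms]] by (rule antisym)
qed

(* The increasing enumeration of S. Outside enum_dom S the LEAST ranges over an empty set,
   so there enum S is junk. *)
definition enum :: "'a::wellorder set \<Rightarrow> 'a \<Rightarrow> 'a" where
  "enum S = wfrec {(v, u). v < u} (\<lambda>R u. LEAST s. s \<in> S \<and> (\<forall>v<u. R v < s))"

definition enum_dom :: "'a::wellorder set \<Rightarrow> 'a set" where
  "enum_dom S = {u. \<exists>s\<in>S. \<forall>v<u. enum S v < s}"

lemma enum_unfold: "enum S u = (LEAST s. s \<in> S \<and> (\<forall>v<u. enum S v < s))"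
  unfolding enum_def by (subst wfrec[OF wf]) (simp add: cut_def)

lemma enum_dom_down_closed: "u \<in> enum_dom S \<Longrightarrow> v < u \<Longrightarrow> v \<in> enum_dom S"
  unfolding enum_dom_def using order.strict_trans by blast

lemma enum_in_dom:
  assumes "u \<in> enum_dom S"
  shows "enum S u \<in> S" and "v < u \<Longrightarrow> enum S v < enum S u"
proof -
  have "\<exists>s. s \<in> S \<and> (\<forall>v<u. enum S v < s)" using assms unfolding enum_dom_def by blast
  then have "enum S u \<in> S \<and> (\<forall>v<u. enum S v < enum S u)"
    unfolding enum_unfold[of S u] by (rule LeastI_ex)
  then show "enum S u \<in> S" and "v < u \<Longrightarrow> enum S v < enum S u" by blast+
qed

lemma strict_mono_on_enum: "strict_mono_on (enum_dom S) (enum S)"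
  by (rule strict_mono_onI) (rule enum_in_dom(2))

lemma enum_ge_self: "u \<in> enum_dom S \<Longrightarrow> u \<le> enum S u"
  using strict_mono_on_down_closed_le[OF strict_mono_on_enum enum_dom_down_closed] .

lemma enum_image_enum_dom: "enum S ` enum_dom S = S"
proof (intro equalityI subsetI)
  fix s assume "s \<in> enum S ` enum_dom S"
  then show "s \<in> S" using enum_in_dom(1) by blast
next
  fix s assume s: "s \<in> S"
  let ?P = "\<lambda>u. u \<in> enum_dom S \<and> enum S u < s"
  define u0 where "u0 = (LEAST u. \<not> ?P u)"
  have "\<not> ?P s" using enum_ge_self leD by blast
  then have u0: "\<not> ?P u0" unfolding u0_def by (rule LeastI)
  have below: "?P v" if "v < u0" for v using not_less_Least[OF that[unfolded u0_def]] by blast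
  then have dom: "u0 \<in> enum_dom S" unfolding enum_dom_def using s by blast
  moreover have "enum S u0 \<le> s"
    unfolding enum_unfold[of S u0] using s below by (intro Least_le) blast
  ultimately have "enum S u0 = s" using u0 by (simp add: le_less)
  with dom show "s \<in> enum S ` enum_dom S" by blast
qed

lemma enum_dom_eq_lessThan:
  fixes S :: "'a::wellorder set"
  assumes "S \<subseteq> {z. z < a}"
  shows "\<exists>t\<le>a. enum_dom S = {z. z < t}"
proof -
  define t where "t = (LEAST t. t \<notin> enum_dom S)"
  have "a \<notin> enum_dom S"
    using assms enum_ge_self enum_in_dom(1) leD by blast
  then have "t \<le> a" and t: "t \<notin> enum_dom S"
    unfolding t_def by (rule Least_le, rule LeastI)
  moreover have "enum_dom S = {z. z < t}"
  proof (intro equalityI subsetI)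
    fix u assume u: "u \<in> enum_dom S"
    show "u \<in> {z. z < t}"
    proof (rule ccontr)
      assume "u \<notin> {z. z < t}"
      then have "t \<le> u" by simp
      then show False using u t enum_dom_down_closed by (auto simp: le_less)
    qed
  next
    fix u assume "u \<in> {z. z < t}"
    then show "u \<in> enum_dom S" using not_less_Least unfolding t_def by blast
  qed
  ultimately show ?thesis by blast
qed

lemma oiso_lessThan_exists:
  fixes S :: "'a::wellorder set"
  assumes "S \<subseteq> {z. z < a}"
  shows "\<exists>t\<le>a. oiso {z. z < t} S"
proof -
  have "order_iso_on (enum S) (enum_dom S) S"
    unfolding order_iso_on_def bij_betw_def
    using strict_mono_on_enum strict_mono_on_imp_inj_on enum_image_enum_dom by blast
  then show ?thesis
    using enum_dom_eq_lessThan[OF assms] oiso_iff_order_iso_on by metis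
qed

lemma addprin_pos: "addprin p \<Longrightarrow> ozero < p"
  by (simp add: addprin_def)

(* a = g + \<omega>^b for some g *)
definition ell_rel :: "'a::wellorder \<Rightarrow> 'a \<Rightarrow> bool" where
  "ell_rel a b \<longleftrightarrow> (\<exists>g (p::'a). g \<le> a \<and> addprin p \<and> oiso {z. g \<le> z \<and> z < a} {z. z < p}
                        \<and> oiso {z. z < b} {q. addprin q \<and> q < p})"

lemma addprin_final_segment_unique:
  fixes a p1 p2 :: "'a::wellorder"
  assumes "addprin p1" "addprin p2"
    and "oiso {z. g1 \<le> z \<and> z < a} {z. z < p1}" "oiso {z. g2 \<le> z \<and> z < a} {z. z < p2}"
  shows "p1 = p2"
proof -
  have ordered: "p2 = p1"
    if le: "g1 \<le> g2" and p1: "addprin p1" and p2: "addprin p2"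
      and iso1: "oiso {z. g1 \<le> z \<and> z < a} {z. z < p1}"
      and iso2: "oiso {z. g2 \<le> z \<and> z < a} {z. z < p2}"
    for g1 g2 p1 p2
  proof -
    obtain k where k: "order_iso_on k {z. g1 \<le> z \<and> z < a} {z. z < p1}"
      using iso1 oiso_iff_order_iso_on by blast
    have "{z. g2 \<le> z \<and> z < a} \<noteq> {}"
      using oiso_empty_iff[OF iso2] addprin_pos[OF p2] by blast
    then have g2: "g2 \<in> {z. g1 \<le> z \<and> z < a}" using le by auto
    have "{z \<in> {z. g1 \<le> z \<and> z < a}. g2 \<le> z} = {z. g2 \<le> z \<and> z < a}"
      using le by auto
    moreover have "{w \<in> {z. z < p1}. k g2 \<le> w} = {w. k g2 \<le> w \<and> w < p1}"
      by auto
    ultimately have "oiso {z. g2 \<le> z \<and> z < a} {w. k g2 \<le> w \<and> w < p1}"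
      using order_iso_on_above[OF k g2] oiso_iff_order_iso_on by metis
    moreover have "oiso {w. k g2 \<le> w \<and> w < p1} {z. z < p1}"
      using p1 order_iso_on_imageD[OF k] g2 by (auto simp: addprin_def)
    ultimately have "oiso {z. z < p2} {z. z < p1}"
      using iso2 oiso_sym oiso_trans by metis
    then show ?thesis by (rule oiso_lessThan_eq)
  qed
  show ?thesis
    using ordered[of g1 g2 p1 p2] ordered[of g2 g1 p2 p1] assms by (cases "g1 \<le> g2") auto
qed

lemma ell_rel_unique:
  fixes a :: "'a::wellorder"
  assumes "ell_rel a b1" "ell_rel a b2"
  shows "b1 = b2"
proof -
  obtain g1 and p1 :: 'a where 1: "addprin p1" "oiso {z. g1 \<le> z \<and> z < a} {z. z < p1}"
    "oiso {z. z < b1} {q. addprin q \<and> q < p1}"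
    using assms(1) unfolding ell_rel_def by blast
  obtain g2 and p2 :: 'a where 2: "addprin p2" "oiso {z. g2 \<le> z \<and> z < a} {z. z < p2}"
    "oiso {z. z < b2} {q. addprin q \<and> q < p2}"
    using assms(2) unfolding ell_rel_def by blast
  have "p1 = p2" using addprin_final_segment_unique 1(1,2) 2(1,2) by blast
  then have "oiso {z. z < b1} {z. z < b2}" using 1(3) 2(3) oiso_sym oiso_trans by metis
  then show ?thesis by (rule oiso_lessThan_eq)
qed

(* The least order type p of a nonempty final segment of a is additively principal, since
   every final segment of p is again the order type of a final segment of a. *)
lemma ex_addprin_final_segment:
  fixes a :: "'a::wellorder"
  assumes "a \<noteq> ozero"
  shows "\<exists>g<a. \<exists>p::'a. addprin p \<and> oiso {z. g \<le> z \<and> z < a} {z. z < p}"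
proof -
  define T :: "'a set" where "T = {t. \<exists>g<a. oiso {z. g \<le> z \<and> z < a} {z. z < t}}"
  have "oiso {z. ozero \<le> z \<and> z < a} {z. z < a}" by (simp add: oiso_refl)
  then have "a \<in> T" unfolding T_def using assms ozero_less_iff by blast
  define p where "p = (LEAST t. t \<in> T)"
  have "p \<in> T" unfolding p_def using \<open>a \<in> T\<close> by (rule LeastI)
  then obtain g k where g: "g < a" and k: "order_iso_on k {z. g \<le> z \<and> z < a} {z. z < p}"
    unfolding T_def oiso_iff_order_iso_on by blast
  have "addprin p"
    unfolding addprin_def
  proof (intro conjI allI impI)
    have "k g < p" using order_iso_on_imageD[OF k] g by auto
    then show "ozero < p" using ozero_le le_less_trans by blast
  next
    fix u assume "u < p"
    then have "u \<in> k ` {z. g \<le> z \<and> z < a}" using order_iso_on_imageD[OF k] by simp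
    then obtain u' where "u = k u'" and u': "u' \<in> {z. g \<le> z \<and> z < a}" by (rule imageE)
    have "{z \<in> {z. g \<le> z \<and> z < a}. u' \<le> z} = {z. u' \<le> z \<and> z < a}"
      using u' by auto
    moreover have "{w \<in> {z. z < p}. k u' \<le> w} = {w. u \<le> w \<and> w < p}"
      using \<open>u = k u'\<close> by auto
    ultimately have final: "oiso {z. u' \<le> z \<and> z < a} {w. u \<le> w \<and> w < p}"
      using order_iso_on_above[OF k u'] oiso_iff_order_iso_on by metis
    obtain s where s: "s \<le> p" "oiso {z. z < s} {w. u \<le> w \<and> w < p}"
      using oiso_lessThan_exists[of "{w. u \<le> w \<and> w < p}" p] by auto
    have "s \<in> T"
      unfolding T_def using u' final oiso_sym[OF s(2)] oiso_trans by blast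
    then have "s = p" using s(1) Least_le[of "\<lambda>t. t \<in> T"] unfolding p_def by fastforce
    then show "oiso {z. u \<le> z \<and> z < p} {z. z < p}" using s(2) oiso_sym by blast
  qed
  moreover have "oiso {z. g \<le> z \<and> z < a} {z. z < p}"
    using k oiso_iff_order_iso_on by blast
  ultimately show ?thesis using g by blast
qed

lemma ell_rel_exists:
  fixes a :: "'a::wellorder"
  assumes "a \<noteq> ozero"
  shows "\<exists>b. ell_rel a b"
proof -
  obtain g and p :: 'a where "g < a" "addprin p" "oiso {z. g \<le> z \<and> z < a} {z. z < p}"
    using ex_addprin_final_segment[OF assms] by blast
  moreover obtain b :: 'a where "oiso {z. z < b} {q. addprin q \<and> q < p}"
    using oiso_lessThan_exists[of "{q. addprin q \<and> q < p}" p] by auto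
  ultimately show ?thesis unfolding ell_rel_def using less_imp_le by blast
qed

lemma ell_eqI:
  assumes "a \<noteq> ozero" and b: "ell_rel a b"
  shows "ell a = b"
proof -
  have "ell a = (THE b. ell_rel a b)"
    using assms(1) by (simp add: ell_def ell_rel_def)
  also have "\<dots> = b"
    by (rule the_equality[where P = "ell_rel a", OF b ell_rel_unique[OF _ b]])
  finally show ?thesis .
qed

lemma ell_rel_ell: "a \<noteq> ozero \<Longrightarrow> ell_rel a (ell a)"
  using ell_rel_exists ell_eqI by metis

lemma ell_attains_below:
  fixes a :: "'a::wellorder"
  assumes \<beta>: "\<beta> < ell a"
  shows "\<exists>c<a. ell c = \<beta>"
proof -
  have "a \<noteq> ozero" using \<beta> by auto
  then obtain g and p :: 'a and k h where "g \<le> a" and "addprin p"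
    and k: "order_iso_on k {z. g \<le> z \<and> z < a} {z. z < p}"
    and h: "order_iso_on h {z. z < ell a} {q. addprin q \<and> q < p}"
    using ell_rel_ell unfolding ell_rel_def oiso_iff_order_iso_on by blast
  have \<beta>_dom: "\<beta> \<in> {z. z < ell a}" using \<beta> by simp
  (* q = \<omega>^\<beta>, and its k-preimage c is g + \<omega>^\<beta> *)
  define q where "q = h \<beta>"
  have q: "addprin q" "q < p" using order_iso_on_imageD[OF h] \<beta>_dom unfolding q_def by auto
  then have "q \<in> k ` {z. g \<le> z \<and> z < a}" using order_iso_on_imageD[OF k] by simp
  then obtain c where "q = k c" and c: "c \<in> {z. g \<le> z \<and> z < a}" by (rule imageE)
  have "{z \<in> {z. g \<le> z \<and> z < a}. z < c} = {z. g \<le> z \<and> z < c}" using c by auto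
  moreover have "{w \<in> {z. z < p}. w < k c} = {w. w < q}" using \<open>q = k c\<close> q(2) by auto
  ultimately have tail: "oiso {z. g \<le> z \<and> z < c} {w. w < q}"
    using order_iso_on_below[OF k c] oiso_iff_order_iso_on by metis
  have "{z \<in> {z. z < ell a}. z < \<beta>} = {z. z < \<beta>}" using \<beta> by auto
  moreover have "{w \<in> {q. addprin q \<and> q < p}. w < h \<beta>} = {r. addprin r \<and> r < q}"
    using q(2) unfolding q_def by auto
  ultimately have exponent: "oiso {z. z < \<beta>} {r. addprin r \<and> r < q}"
    using order_iso_on_below[OF h \<beta>_dom] oiso_iff_order_iso_on by metis
  have "ell_rel c \<beta>" unfolding ell_rel_def using c q(1) tail exponent by blast
  moreover have "c \<noteq> ozero"
    using oiso_empty_iff[OF tail] addprin_pos[OF q(1)] by auto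
  ultimately show ?thesis using ell_eqI c by blast
qed

lemma SrelPow_unfold:
  "SrelPow n \<alpha> x y \<longleftrightarrow> (if \<alpha> = ozero then x = y
     else (\<forall>\<beta><\<alpha>. \<exists>z\<in>Hset. Srel n x z \<and> SrelPow n \<beta> z y))"
  unfolding SrelPow_def by (subst wfrec[OF wf]) (simp add: cut_def)

lemma lseq_ozero_propagates:
  assumes "lseq x" "x m = ozero" "m \<le> k"
  shows "x k = ozero"
  using assms(3)
proof (induction k rule: dec_induct)
  case base
  show ?case using assms(2) .
next
  case (step i)
  then show ?case using assms(1) by (metis lseq_def ell_ozero ozero_le antisym)
qed

lemma SrelPow_le: "SrelPow n \<alpha> x y \<Longrightarrow> \<alpha> \<le> x n"
proof (induction \<alpha> arbitrary: x rule: less_induct)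
  case (less \<alpha>)
  have "\<beta> < x n" if "\<beta> < \<alpha>" for \<beta>
  proof -
    obtain z where "Srel n x z" and "SrelPow n \<beta> z y"
      using less.prems \<open>\<beta> < \<alpha>\<close> SrelPow_unfold[of n \<alpha>] by (auto split: if_split_asm)
    then have "z n < x n" and "\<beta> \<le> z n"
      using less.IH[OF \<open>\<beta> < \<alpha>\<close>] unfolding Srel_def by auto
    then show ?thesis by simp
  qed
  then show ?case by (meson less_irrefl not_le)
qed

lemma lseq_prefix_below:
  assumes "lseq x"
  shows "\<beta> < x n \<Longrightarrow> \<exists>w. (\<forall>m\<le>n. w m < x m) \<and> w n = \<beta> \<and> (\<forall>i<n. w (Suc i) \<le> ell (w i))"
proof (induction n arbitrary: \<beta>)
  case 0
  then show ?case by (intro exI[of _ "\<lambda>_. \<beta>"]) auto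
next
  case (Suc n)
  have "\<beta> < ell (x n)" using Suc.prems assms unfolding lseq_def by (metis less_le_trans)
  then obtain c where c: "c < x n" "ell c = \<beta>" using ell_attains_below by blast
  obtain w where w: "\<forall>m\<le>n. w m < x m" "w n = c" "\<forall>i<n. w (Suc i) \<le> ell (w i)"
    using Suc.IH[OF c(1)] by blast
  have "\<forall>m\<le>Suc n. (w(Suc n := \<beta>)) m < x m" using w(1) Suc.prems by (auto simp: le_Suc_eq)
  moreover have "\<forall>i<Suc n. (w(Suc n := \<beta>)) (Suc i) \<le> ell ((w(Suc n := \<beta>)) i)"
    using w c by (auto simp: less_Suc_eq)
  ultimately show ?case by (intro exI[of _ "w(Suc n := \<beta>)"]) simp
qed

lemma ex_Srel_coordinate:
  assumes "lseq x" "\<beta> < x n"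
  shows "\<exists>z\<in>Hset. Srel n x z \<and> z n = \<beta>"
proof -
  obtain w where w: "\<forall>m\<le>n. w m < x m" "w n = \<beta>" "\<forall>i<n. w (Suc i) \<le> ell (w i)"
    using lseq_prefix_below[OF assms] by blast
  define z where "z i = (if i \<le> n then w i else ozero)" for i
  have "lseq z" unfolding lseq_def z_def using w(3) by (auto simp: not_le)
  moreover have "z (Suc n) = ozero" unfolding z_def by simp
  ultimately have "z \<in> Hset" unfolding Hset_def by blast
  moreover have "Srel n x z" unfolding Srel_def z_def using w(1) by auto
  ultimately show ?thesis using w(2) unfolding z_def by auto
qed

lemma ozero_seq_in_Hset: "(\<lambda>_. ozero) \<in> Hset"
  unfolding Hset_def lseq_def by simp

lemma Srel_ozero_seq:
  assumes "lseq x" "x n \<noteq> ozero"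
  shows "Srel n x (\<lambda>_. ozero)"
  unfolding Srel_def
  using lseq_ozero_propagates[OF assms(1)] assms(2) by (auto simp: ozero_less_iff)

lemma SrelPow_ozero_seq:
  assumes "x \<in> Hset" "\<alpha> \<noteq> ozero" "\<alpha> \<le> x n"
  shows "SrelPow n \<alpha> x (\<lambda>_. ozero)"
  using assms
proof (induction \<alpha> arbitrary: x rule: less_induct)
  case (less \<alpha>)
  have lx: "lseq x" using less.prems(1) unfolding Hset_def by blast
  have "\<exists>z\<in>Hset. Srel n x z \<and> SrelPow n \<beta> z (\<lambda>_. ozero)" if \<beta>: "\<beta> < \<alpha>" for \<beta>
  proof (cases "\<beta> = ozero")
    case True
    have "x n \<noteq> ozero" using less.prems(2,3) by (auto simp: le_less)
    then show ?thesis
      using True Srel_ozero_seq[OF lx] ozero_seq_in_Hset SrelPow_unfold by metis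
  next
    case False
    obtain z where "z \<in> Hset" "Srel n x z" "z n = \<beta>"
      using ex_Srel_coordinate[OF lx] \<beta> less.prems(3) by (meson less_le_trans)
    then show ?thesis using less.IH[OF \<beta> _ False] by auto
  qed
  then show ?case using less.prems(2) SrelPow_unfold[of n \<alpha>] by simp
qed

lemma forces_Dia_coordinate:
  assumes "x \<in> Hset"
  shows "forces x (Dia n (x n) Top)"
proof (cases "x n = ozero")
  case True
  then show ?thesis using assms SrelPow_unfold by fastforce
next
  case False
  then show ?thesis using SrelPow_ozero_seq[OF assms] ozero_seq_in_Hset by auto
qed

fun coordinate_fm :: "(nat \<Rightarrow> 'a::wellorder) \<Rightarrow> nat \<Rightarrow> 'a fm" where
  "coordinate_fm x 0 = Top"
| "coordinate_fm x (Suc k) = Conj (Dia k (x k) Top) (coordinate_fm x k)"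

lemma forces_coordinate_fm:
  "forces y (coordinate_fm x k) \<longleftrightarrow> (\<forall>n<k. forces y (Dia n (x n) Top))"
  by (induction k) (auto simp: less_Suc_eq)

theorem theorem6p3:
  fixes x :: "nat \<Rightarrow> 'a::wellorder"
  assumes "countable (UNIV :: 'a set)"
    and "eps_number_type TYPE('a)"
    and "x \<in> Hset"
  shows "\<exists>\<phi>. forces x \<phi> \<and> (\<forall>y\<in>down x. \<not> forces y \<phi>)"
proof -
  obtain N where N: "x N = ozero" using assms(3) unfolding Hset_def by blast
  have "forces x (coordinate_fm x N)"
    using forces_Dia_coordinate[OF assms(3)] forces_coordinate_fm by blast
  moreover have "\<not> forces y (coordinate_fm x N)" if "y \<in> down x" for y
  proof
    assume forces: "forces y (coordinate_fm x N)"
    obtain j where j: "y j < x j" using \<open>y \<in> down x\<close> unfolding down_def by blast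
    have "lseq x" using assms(3) unfolding Hset_def by blast
    moreover have "x j \<noteq> ozero" using j by auto
    ultimately have "j < N" using lseq_ozero_propagates[of x N j] N by (meson not_less)
    then obtain w where "SrelPow j (x j) y w"
      using forces[unfolded forces_coordinate_fm] by auto
    then have "x j \<le> y j" by (rule SrelPow_le)
    with j show False using leD by blast
  qed
  ultimately show ?thesis by blast
qed

end
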